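(* Let $\gamma\in\mathbb Q\cap(0,1)$ and let $\gamma_2$ be its right Farey parent. For every $\beta\in(1,2)$ with $$\mathbf d_\beta\in[\,w_\gamma^\infty,\ w_{\gamma_2}w_\gamma^\infty\,]$$ in the lexicographic order, one has $\gamma(\beta)=\gamma$.
   Context: For $\beta\in(1,2)$, let $\mathbf d_\beta=d_1d_2\dots$ be the quasi-greedy expansion of $1$. It equals the greedy expansion $\tilde d_i=\lfloor\beta T_\beta^{i-1}(1)\rfloor$ of $1$ if that expansion does not end in $0^\infty$. If instead the greedy expansion is $\tilde d_1\dots\tilde d_k0^\infty$ with $\tilde d_k=1$, then $\mathbf d_\beta=(\tilde d_1\dots\tilde d_{k-1}0)^\infty$. The admissible set is $X_\beta=\{(x_i)\in\{0,1\}^{\mathbb N}: x_jx_{j+1}\dots\preceq\mathbf d_\beta\ \forall j\}$, where $\preceq$ is the lexicographic order. Farey tree of words: set $w_{0/1}=0$ and $w_{1/1}=1$. Two fractions $a/b<c/d$ are neighbours if $bc-ad=1$. For neighbours $\gamma_1=a/b<\gamma_2=c/d$, put $\gamma_1\oplus\gamma_2=(a+c)/(b+d)$ and $w_{\gamma_1\oplus\gamma_2}=w_{\gamma_2}w_{\gamma_1}$. Every rational $\gamma\in(0,1)$ arises uniquely as $\gamma=\gamma_1\oplus\gamma_2$ with neighbours $\gamma_1<\gamma_2$; these are its left and right Farey parents. The word $w_\gamma$ is the lexicographically maximal cyclic shift of the cyclically balanced word of length $q$ with $p$ ones, where $\gamma=p/q$. $\gamma(\beta)$: the number $\gamma\in[0,1]$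 associated to the lexicographically maximal admissible balanced sequence. Equivalently, $\gamma(\beta)=\sup\{\gamma\in\mathbb Q\cap[0,1]: w_\gamma^\infty\in X_\beta\}$. It satisfies: $w_\gamma^\infty$ is admissible iff $\gamma\le\gamma(\beta)$. *)

theory Defs
  imports Complex_Main
begin

text \<open>Infinite 0-1 sequences are functions nat => nat; index 0 is the first digit.\<close>

definition lex_le :: "(nat \<Rightarrow> nat) \<Rightarrow> (nat \<Rightarrow> nat) \<Rightarrow> bool" where
  "lex_le x y \<longleftrightarrow> x = y \<or> (\<exists>n. (\<forall>i<n. x i = y i) \<and> x n < y n)"

definition beta_map :: "real \<Rightarrow> real \<Rightarrow> real" where
  "beta_map \<beta> x = \<beta> * x - of_int \<lfloor>\<beta> * x\<rfloor>"

definition greedy_one :: "real \<Rightarrow> nat \<Rightarrow> nat" where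
  "greedy_one \<beta> i = nat \<lfloor>\<beta> * (beta_map \<beta> ^^ i) 1\<rfloor>"

definition greedy_finite :: "real \<Rightarrow> nat \<Rightarrow> bool" where
  "greedy_finite \<beta> k \<longleftrightarrow> greedy_one \<beta> k = 1 \<and> (\<forall>j>k. greedy_one \<beta> j = 0)"

text \<open>Quasi-greedy expansion of 1: if the greedy expansion is
  d_1 ... d_k 0^infinity with d_k = 1, it is (d_1 ... d_{k-1} 0)^infinity.\<close>

definition quasi_greedy :: "real \<Rightarrow> nat \<Rightarrow> nat" where
  "quasi_greedy \<beta> =
     (if \<exists>k. greedy_finite \<beta> k then
        (let k = (THE k. greedy_finite \<beta> k) in
          (\<lambda>i. if i mod (Suc k) = k then 0 else greedy_one \<beta> (i mod (Suc k))))
      else greedy_one \<beta>)"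

definition admissible :: "real \<Rightarrow> (nat \<Rightarrow> nat) \<Rightarrow> bool" where
  "admissible \<beta> x \<longleftrightarrow> (\<forall>i. x i \<in> {0, 1}) \<and> (\<forall>j. lex_le (\<lambda>i. x (i + j)) (quasi_greedy \<beta>))"

definition farey_neighbours :: "rat \<Rightarrow> rat \<Rightarrow> bool" where
  "farey_neighbours g1 g2 \<longleftrightarrow>
     (case quotient_of g1 of (a, b) \<Rightarrow> case quotient_of g2 of (c, d) \<Rightarrow> b * c - a * d = 1)"

definition mediant :: "rat \<Rightarrow> rat \<Rightarrow> rat" where
  "mediant g1 g2 =
     (case quotient_of g1 of (a, b) \<Rightarrow> case quotient_of g2 of (c, d) \<Rightarrow> Fract (a + c) (b + d))"

inductive farey_word :: "rat \<Rightarrow> nat list \<Rightarrow> bool" where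
  zero: "farey_word 0 [0]"
| one: "farey_word 1 [1]"
| med: "farey_neighbours g1 g2 \<Longrightarrow> farey_word g1 u \<Longrightarrow> farey_word g2 v \<Longrightarrow>
        farey_word (mediant g1 g2) (v @ u)"

definition w :: "rat \<Rightarrow> nat list" where
  "w g = (THE u. farey_word g u)"

definition right_parent :: "rat \<Rightarrow> rat" where
  "right_parent g = (THE g2. \<exists>g1. farey_neighbours g1 g2 \<and> mediant g1 g2 = g)"

definition per :: "nat list \<Rightarrow> nat \<Rightarrow> nat" where
  "per u = (\<lambda>i. u ! (i mod length u))"

definition pre_per :: "nat list \<Rightarrow> nat list \<Rightarrow> nat \<Rightarrow> nat" where
  "pre_per v u = (\<lambda>i. if i < length v then v ! i else u ! ((i - length v) mod length u))"

definition gamma_of :: "real \<Rightarrow> real" where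
  "gamma_of \<beta> = Sup (real_of_rat ` {g. 0 \<le> g \<and> g \<le> 1 \<and> admissible \<beta> (per (w g))})"

end

theory Submission
  imports Defs
begin

text \<open>For \<open>0 \<le> g \<le> 1\<close> the Farey word \<open>w g\<close> is one period of the upper mechanical word
  of slope \<open>g\<close>, whose prefix sums are \<open>\<lceil>N g\<rceil>\<close>: if \<open>g = (a + c) / (b + d)\<close> is the
  mediant of \<open>a / b\<close> and \<open>c / d\<close>, then \<open>\<lceil>N g\<rceil> = \<lceil>N c / d\<rceil>\<close> for \<open>N \<le> d\<close> and
  \<open>\<lceil>(d + j) g\<rceil> = c + \<lceil>j a / b\<rceil>\<close> for \<open>j \<le> b\<close>. Lexicographic comparisons are then
  decided by prefix sums. Since \<open>\<lceil>(N + j) \<gamma>\<rceil> - \<lceil>j \<gamma>\<rceil> \<le> \<lceil>N \<gamma>\<rceil>\<close>, every shift of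
  \<open>w \<gamma>\<^sup>\<infinity>\<close> lies below \<open>w \<gamma>\<^sup>\<infinity>\<close> and hence below the quasi-greedy expansion, so
  \<open>w \<gamma>\<^sup>\<infinity>\<close> is admissible. For \<open>g > \<gamma>\<close> the prefix sums of \<open>w \<gamma>\<^sub>2 w \<gamma>\<^sup>\<infinity>\<close>,
  namely \<open>\<lceil>N \<gamma>\<rceil>\<close> up to \<open>d\<close> and \<open>c + \<lceil>(N - d) \<gamma>\<rceil>\<close> afterwards, never exceed
  \<open>\<lceil>N g\<rceil>\<close> and eventually fall below it; so \<open>w g\<^sup>\<infinity>\<close> lies strictly above the
  quasi-greedy expansion and is not admissible.\<close>

definition ceil_line :: "rat \<Rightarrow> nat \<Rightarrow> int" where
  "ceil_line g n = \<lceil>of_nat n * g\<rceil>"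

definition mech_word :: "rat \<Rightarrow> nat list" where
  "mech_word g = map (\<lambda>i. nat (ceil_line g (Suc i) - ceil_line g i)) [0..<nat (snd (quotient_of g))]"

lemma ceiling_diff_small:
  fixes n k :: int and e :: rat
  assumes k: "0 < k" and "0 \<le> e" "e < 1 / of_int k"
  shows "\<lceil>of_int n / of_int k - e\<rceil> = \<lceil>of_int n / of_int k :: rat\<rceil>"
proof -
  define m where "m = \<lceil>of_int n / of_int k :: rat\<rceil>"
  have "of_int m - 1 < (of_int n / of_int k :: rat)"
    unfolding m_def by (rule ceiling_correct[THEN conjunct1])
  then have "k * (m - 1) < n"
    using k by (simp add: field_simps flip: of_int_mult of_int_diff of_int_less_iff)
  then have "(of_int m - 1) * of_int k \<le> (of_int n - 1 :: rat)"
    by (simp add: algebra_simps flip: of_int_mult of_int_diff of_int_le_iff)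
  then have "of_int m - 1 \<le> of_int n / of_int k - 1 / (of_int k :: rat)"
    using k by (simp add: field_simps)
  then have "of_int m - 1 < (of_int n / of_int k - e :: rat)"
    using assms(3) by simp
  moreover have "of_int n / of_int k - e \<le> (of_int m :: rat)"
    unfolding m_def using assms(2) le_of_int_ceiling[of "of_int n / of_int k :: rat"] by linarith
  ultimately show ?thesis
    unfolding m_def[symmetric] by (simp add: ceiling_unique)
qed

lemma mediant_eq:
  "quotient_of g1 = (a, b) \<Longrightarrow> quotient_of g2 = (c, d) \<Longrightarrow>
    mediant g1 g2 = of_int (a + c) / of_int (b + d)"
  by (simp add: mediant_def Fract_of_int_quotient)

lemma ceil_line_mediant_prefix:
  assumes q1: "quotient_of g1 = (a, b)" and q2: "quotient_of g2 = (c, d)"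
    and h: "b * c - a * d = 1" and N: "int N \<le> d"
  shows "ceil_line (mediant g1 g2) N = ceil_line g2 N"
proof -
  have b: "(0::rat) < of_int b" and d: "(0::rat) < of_int d"
    using q1 q2 quotient_of_denom_pos by auto
  have bd: "of_int b + of_int d \<noteq> (0::rat)" using b d by linarith
  define e :: rat where "e = of_nat N / (of_int d * (of_int b + of_int d))"
  have hq: "of_int b * of_int c - of_int a * of_int d = (1::rat)"
    using h by (simp flip: of_int_mult of_int_diff)
  have "of_int (int N * c) / of_int d = (of_nat N * of_int c * (of_int b + of_int d) / (of_int d * (of_int b + of_int d)) :: rat)"
    using bd by simp
  then have "of_int (int N * c) / of_int d - e
      = ((of_nat N * of_int c * (of_int b + of_int d) - of_nat N) / (of_int d * (of_int b + of_int d)) :: rat)"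
    unfolding e_def by (simp add: diff_divide_distrib)
  also have "of_nat N * of_int c * (of_int b + of_int d) - of_nat N = of_nat N * (of_int a + of_int c) * (of_int d :: rat)"
    using hq by algebra
  finally have "of_nat N * mediant g1 g2 = of_int (int N * c) / of_int d - e"
    unfolding mediant_eq[OF q1 q2] using d by simp
  moreover have "e < 1 / of_int d"
  proof -
    have "e \<le> of_int d / (of_int d * (of_int b + of_int d))"
      unfolding e_def using b d N by (intro divide_right_mono) auto
    also have "\<dots> < 1 / of_int d" using b d by (simp add: frac_less2)
    finally show ?thesis .
  qed
  ultimately show ?thesis
    unfolding ceil_line_def quotient_of_div[OF q2]
    using ceiling_diff_small[of d e "int N * c"] q2 quotient_of_denom_pos e_def b d by simp
qed

lemma ceil_line_mediant_suffix:
  assumes q1: "quotient_of g1 = (a, b)" and q2: "quotient_of g2 = (c, d)"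
    and h: "b * c - a * d = 1" and j: "int j \<le> b"
  shows "ceil_line (mediant g1 g2) (nat d + j) = c + ceil_line g1 j"
proof -
  have b: "(0::rat) < of_int b" and d: "0 < d"
    using q1 q2 quotient_of_denom_pos by auto
  have bd: "of_int b + of_int d \<noteq> (0::rat)" using b d by simp
  have jb: "(of_nat j :: rat) \<le> of_int b" using j by (metis of_int_le_iff of_int_of_nat_eq)
  have hq: "of_int b * of_int c - of_int a * of_int d = (1::rat)"
    using h by (simp flip: of_int_mult of_int_diff)
  define e :: rat where "e = (of_int b - of_nat j) / (of_int b * (of_int b + of_int d))"
  have "of_int (c * b + int j * a) / of_int b
      = ((of_int c * of_int b + of_nat j * of_int a) * (of_int b + of_int d) / (of_int b * (of_int b + of_int d)) :: rat)"
    using bd by simp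
  then have "of_int (c * b + int j * a) / of_int b - e
      = (((of_int c * of_int b + of_nat j * of_int a) * (of_int b + of_int d) - (of_int b - of_nat j))
          / (of_int b * (of_int b + of_int d)) :: rat)"
    unfolding e_def by (simp add: diff_divide_distrib)
  also have "(of_int c * of_int b + of_nat j * of_int a) * (of_int b + of_int d) - (of_int b - of_nat j)
      = (of_int d + of_nat j) * (of_int a + of_int c) * (of_int b :: rat)"
    using hq by algebra
  finally have "of_nat (nat d + j) * mediant g1 g2 = of_int (c * b + int j * a) / of_int b - e"
    unfolding mediant_eq[OF q1 q2] using b d by simp
  moreover have "e < 1 / of_int b"
  proof -
    have "e \<le> of_int b / (of_int b * (of_int b + of_int d))"
      unfolding e_def using b d jb by (intro divide_right_mono) auto
    also have "\<dots> < 1 / of_int b" using b d by (simp add: frac_less2)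
    finally show ?thesis .
  qed
  moreover have "0 \<le> e" unfolding e_def using b d jb by simp
  moreover have "(of_int (c * b + int j * a) / of_int b :: rat) = of_nat j * g1 + of_int c"
    unfolding quotient_of_div[OF q1] using b by (simp add: field_simps)
  ultimately show ?thesis
    unfolding ceil_line_def
    using ceiling_diff_small[of b e "c * b + int j * a"] q1 quotient_of_denom_pos by simp
qed

lemma coprime_of_bezout: "u * x + v * y = (1::int) \<Longrightarrow> coprime x y"
proof (rule coprimeI)
  fix k assume "u * x + v * y = 1" "k dvd x" "k dvd y"
  then have "k dvd 1" by (metis dvd_add dvd_mult)
  then show "is_unit k" .
qed

lemma quotient_of_mediant:
  assumes q1: "quotient_of g1 = (a, b)" and q2: "quotient_of g2 = (c, d)" and h: "b * c - a * d = 1"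
  shows "quotient_of (mediant g1 g2) = (a + c, b + d)"
proof -
  have "coprime (a + c) (b + d)"
    by (rule coprime_of_bezout[of b _ "- a"]) (use h in \<open>simp add: algebra_simps\<close>)
  then show ?thesis
    using q1 q2 quotient_of_denom_pos[OF q1] quotient_of_denom_pos[OF q2]
    by (simp add: mediant_def quotient_of_Fract)
qed

lemma length_mech_word: "quotient_of g = (p, q) \<Longrightarrow> length (mech_word g) = nat q"
  by (simp add: mech_word_def)

lemma mech_word_mediant:
  assumes q1: "quotient_of g1 = (a, b)" and q2: "quotient_of g2 = (c, d)" and h: "b * c - a * d = 1"
  shows "mech_word (mediant g1 g2) = mech_word g2 @ mech_word g1"
proof (rule nth_equalityI)
  have b: "0 < b" and d: "0 < d" using q1 q2 quotient_of_denom_pos by blast+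
  then have bd: "nat (b + d) = nat d + nat b" by simp
  have qm: "quotient_of (mediant g1 g2) = (a + c, b + d)" by (rule quotient_of_mediant[OF q1 q2 h])
  show len: "length (mech_word (mediant g1 g2)) = length (mech_word g2 @ mech_word g1)"
    using b d by (simp add: length_mech_word[OF qm] length_mech_word[OF q1] length_mech_word[OF q2])
  fix i assume "i < length (mech_word (mediant g1 g2))"
  then have i: "i < nat d + nat b" using b d by (simp add: length_mech_word[OF qm])
  show "mech_word (mediant g1 g2) ! i = (mech_word g2 @ mech_word g1) ! i"
  proof (cases "i < nat d")
    case True
    then show ?thesis
      using i bd ceil_line_mediant_prefix[OF q1 q2 h, of i] ceil_line_mediant_prefix[OF q1 q2 h, of "Suc i"]
      by (simp add: mech_word_def qm q1 q2 nth_append)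
  next
    case False
    then obtain j where j: "i = nat d + j" "j < nat b" using i by (metis add_diff_inverse_nat nat_add_left_cancel_less)
    then show ?thesis
      using bd ceil_line_mediant_suffix[OF q1 q2 h, of j] ceil_line_mediant_suffix[OF q1 q2 h, of "Suc j"] b d
      by (simp add: mech_word_def qm q1 q2 nth_append)
  qed
qed

lemma farey_word_imp_mech_word: "farey_word g u \<Longrightarrow> u = mech_word g"
proof (induction rule: farey_word.induct)
  case (med g1 g2 u v)
  obtain a b where q1: "quotient_of g1 = (a, b)" by (cases "quotient_of g1")
  obtain c d where q2: "quotient_of g2 = (c, d)" by (cases "quotient_of g2")
  have "b * c - a * d = 1" using med.hyps(1) q1 q2 by (simp add: farey_neighbours_def)
  then show ?case using mech_word_mediant[OF q1 q2] med.IH by simp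
qed (simp_all add: mech_word_def ceil_line_def)

lemma farey_split_int:
  fixes p q :: int
  assumes cop: "coprime p q" and p: "0 < p" and pq: "p < q"
  obtains a b c d where "0 \<le> a" "a < b" "0 < c" "c \<le> d" "b * c - a * d = 1" "a + c = p" "b + d = q"
proof -
  obtain u v where uv: "u * p + v * q = 1" using bezout_int[of p q] cop by auto
  \<comment> \<open>\<open>b\<close> is the inverse of \<open>p\<close> modulo \<open>q\<close>\<close>
  define b where "b = u mod q"
  define a where "a = - (v + (u div q) * p)"
  have h1: "b * p - a * q = 1"
  proof -
    have bu: "b = u - (u div q) * q" unfolding b_def by (simp add: minus_div_mult_eq_mod)
    have "b * p - a * q = u * p + v * q" unfolding bu a_def by (simp add: algebra_simps)
    with uv show ?thesis by simp
  qed
  have b0: "0 \<le> b" "b < q" unfolding b_def using p pq by auto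
  have "b \<noteq> 0"
  proof
    assume "b = 0"
    then have "q dvd 1" using h1 by (metis add.inverse_inverse diff_0 dvd_triv_right minus_mult_left mult_zero_left)
    then show False using p pq by simp
  qed
  with b0 have bp: "0 < b" by simp
  have "1 \<le> b * p" using bp p by (simp add: int_one_le_iff_zero_less)
  then have "0 \<le> a * q" using h1 by simp
  then have a0: "0 \<le> a" using p pq by (simp add: zero_le_mult_iff)
  have "b * p < b * q" using bp pq by simp
  then have "a * q < b * q" using h1 by simp
  then have ab: "a < b" using p pq by simp
  define c where "c = p - a"
  define d where "d = q - b"
  have d0: "0 < d" unfolding d_def using b0 by simp
  have h: "b * c - a * d = 1" unfolding c_def d_def using h1 by (simp add: algebra_simps)
  have c0: "0 < c"
  proof (rule ccontr)
    assume "\<not> 0 < c"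
    then have "b * c \<le> 0" using bp by (simp add: mult_le_0_iff)
    moreover have "0 \<le> a * d" using a0 d0 by simp
    ultimately show False using h by simp
  qed
  have "c \<le> d"
  proof (rule ccontr)
    assume "\<not> c \<le> d"
    then have "b \<le> b * (c - d)" and "d \<le> d * (b - a)"
      using bp d0 ab by (simp_all add: mult_le_cancel_left1)
    moreover have "b * c - a * d = b * (c - d) + d * (b - a)" by (simp add: algebra_simps)
    ultimately show False using h bp d0 by linarith
  qed
  with a0 ab c0 h show ?thesis by (intro that[of a b c d]) (simp_all add: c_def d_def)
qed

lemma farey_parents_exist:
  assumes "0 < g" "g < 1"
  obtains g1 g2 a b c d where "quotient_of g1 = (a, b)" "quotient_of g2 = (c, d)"
    "b * c - a * d = 1" "mediant g1 g2 = g" "0 \<le> g1" "g1 \<le> 1" "0 \<le> g2" "g2 \<le> 1"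
proof -
  obtain p q where qg: "quotient_of g = (p, q)" by (cases "quotient_of g")
  have q: "0 < q" using qg quotient_of_denom_pos by blast
  have "0 < p" "p < q"
    using assms q unfolding quotient_of_div[OF qg] by (simp_all add: zero_less_divide_iff divide_less_eq)
  then obtain a b c d where abcd: "0 \<le> a" "a < b" "0 < c" "c \<le> d" "b * c - a * d = 1" "a + c = p" "b + d = q"
    using farey_split_int quotient_of_coprime[OF qg] by blast
  have "coprime a b"
    by (rule coprime_of_bezout[of "- d" _ c]) (use abcd(5) in \<open>simp add: algebra_simps\<close>)
  moreover have "coprime c d"
    by (rule coprime_of_bezout[of b _ "- a"]) (use abcd(5) in \<open>simp add: algebra_simps\<close>)
  ultimately have q1: "quotient_of (Fract a b) = (a, b)" and q2: "quotient_of (Fract c d) = (c, d)"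
    using abcd by (simp_all add: quotient_of_Fract)
  have "mediant (Fract a b) (Fract c d) = g"
    using quotient_of_mediant[OF q1 q2 abcd(5)] qg abcd by (metis quotient_of_inject)
  moreover have "0 \<le> Fract a b" "Fract a b \<le> 1" "0 \<le> Fract c d" "Fract c d \<le> 1"
    using abcd by (simp_all add: Fract_of_int_quotient divide_le_eq)
  ultimately show ?thesis using that q1 q2 abcd(5) by blast
qed

lemma farey_word_mech_word: "0 \<le> g \<Longrightarrow> g \<le> 1 \<Longrightarrow> farey_word g (mech_word g)"
proof (induction "nat (snd (quotient_of g))" arbitrary: g rule: less_induct)
  case less
  consider "g = 0" | "g = 1" | "0 < g" "g < 1" using less.prems by fastforce
  then show ?case
  proof cases
    case 3
    then obtain g1 g2 a b c d where q1: "quotient_of g1 = (a, b)" and q2: "quotient_of g2 = (c, d)"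
      and h: "b * c - a * d = 1" and g: "mediant g1 g2 = g"
      and range: "0 \<le> g1" "g1 \<le> 1" "0 \<le> g2" "g2 \<le> 1"
      by (rule farey_parents_exist)
    have "quotient_of g = (a + c, b + d)" using quotient_of_mediant[OF q1 q2 h] g by simp
    moreover have "0 < b" "0 < d" using q1 q2 quotient_of_denom_pos by blast+
    ultimately have "farey_word g1 (mech_word g1)" "farey_word g2 (mech_word g2)"
      using range q1 q2 by (auto intro!: less.hyps)
    moreover have "farey_neighbours g1 g2" using q1 q2 h by (simp add: farey_neighbours_def)
    ultimately show ?thesis
      using farey_word.med mech_word_mediant[OF q1 q2 h] g by metis
  qed (use farey_word.zero farey_word.one in \<open>simp_all add: mech_word_def ceil_line_def\<close>)
qed

lemma w_eq_mech_word: "0 \<le> g \<Longrightarrow> g \<le> 1 \<Longrightarrow> w g = mech_word g"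
  unfolding w_def by (rule the_equality) (auto intro: farey_word_mech_word dest: farey_word_imp_mech_word)

lemma farey_neighbours_mediant_unique:
  assumes "farey_neighbours g1 g2" "farey_neighbours g1' g2'" "mediant g1 g2 = mediant g1' g2'"
  shows "g2 = g2'"
proof -
  obtain a b c d where q1: "quotient_of g1 = (a, b)" and q2: "quotient_of g2 = (c, d)"
    by (metis surj_pair)
  obtain a' b' c' d' where q1': "quotient_of g1' = (a', b')" and q2': "quotient_of g2' = (c', d')"
    by (metis surj_pair)
  have h: "b * c - a * d = 1" and h': "b' * c' - a' * d' = 1"
    using assms(1,2) q1 q2 q1' q2' by (simp_all add: farey_neighbours_def)
  have pos: "0 < b" "0 < d" "0 < b'" "0 < d'" using q1 q2 q1' q2' quotient_of_denom_pos by blast+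
  have eq: "a + c = a' + c'" "b + d = b' + d'"
    using quotient_of_mediant[OF q1 q2 h] quotient_of_mediant[OF q1' q2' h'] assms(3) by simp_all
  have cop: "coprime (b + d) (a + c)"
    using quotient_of_coprime[OF quotient_of_mediant[OF q1 q2 h]] by (simp add: coprime_commute)
  \<comment> \<open>\<open>b\<close> and \<open>b'\<close> both solve \<open>x (a + c) \<equiv> 1 (mod b + d)\<close> in \<open>(0, b + d)\<close>\<close>
  have "b * (a + c) - a * (b + d) = 1" using h by (simp add: algebra_simps)
  moreover have "b' * (a' + c') - a' * (b' + d') = 1" using h' by (simp add: algebra_simps)
  ultimately have cross: "(b - b') * (a + c) = (a - a') * (b + d)"
    unfolding eq by (simp add: algebra_simps)
  then have "b + d dvd (b - b') * (a + c)" by simp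
  then have "b + d dvd b - b'" using cop coprime_dvd_mult_left_iff by blast
  moreover have "\<bar>b - b'\<bar> < b + d" using pos eq by linarith
  ultimately have "b = b'" using dvd_imp_le_int[of "b - b'" "b + d"] by fastforce
  with cross pos have "a = a'" by simp
  with \<open>b = b'\<close> eq have "quotient_of g2 = quotient_of g2'" using q2 q2' by simp
  then show ?thesis by (rule quotient_of_inject)
qed

lemma right_parent_mediant:
  assumes "farey_neighbours g1 g2"
  shows "right_parent (mediant g1 g2) = g2"
  unfolding right_parent_def
proof (rule the_equality)
  show "\<exists>g1'. farey_neighbours g1' g2 \<and> mediant g1' g2 = mediant g1 g2" using assms by blast
next
  fix g2' assume "\<exists>g1'. farey_neighbours g1' g2' \<and> mediant g1' g2' = mediant g1 g2"
  then show "g2' = g2" using assms farey_neighbours_mediant_unique by metis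
qed

definition psum :: "(nat \<Rightarrow> nat) \<Rightarrow> nat \<Rightarrow> int" where
  "psum x N = (\<Sum>i<N. int (x i))"

lemma lex_le_if_psum_le:
  assumes "\<And>N. psum x N \<le> psum y N"
  shows "lex_le x y"
proof (cases "x = y")
  case False
  then obtain i where "x i \<noteq> y i" by auto
  define n where "n = (LEAST i. x i \<noteq> y i)"
  have xn: "x n \<noteq> y n" unfolding n_def by (rule LeastI) fact
  have eq: "\<forall>i<n. x i = y i" unfolding n_def using not_less_Least by blast
  then have "psum x n = psum y n" unfolding psum_def by (intro sum.cong) auto
  with assms[of "Suc n"] xn have "x n < y n" by (simp add: psum_def)
  with eq show ?thesis unfolding lex_le_def by blast
qed (simp add: lex_le_def)

lemma not_lex_le_if_psum_less:
  assumes le: "\<And>N. psum x N \<le> psum y N" and less: "psum x M < psum y M"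
  shows "\<not> lex_le y x"
proof
  assume "lex_le y x"
  moreover have "y \<noteq> x" using less by auto
  ultimately obtain n where eq: "\<forall>i<n. y i = x i" and lt: "y n < x n" unfolding lex_le_def by blast
  have "psum y n = psum x n" unfolding psum_def using eq by (intro sum.cong) auto
  with lt have "psum y (Suc n) < psum x (Suc n)" by (simp add: psum_def)
  with le show False by (simp add: not_less[symmetric])
qed

lemma lex_le_trans:
  assumes "lex_le x y" "lex_le y z"
  shows "lex_le x z"
proof (cases "x = y \<or> y = z")
  case False
  then obtain n1 n2 where e1: "\<forall>i<n1. x i = y i" and l1: "x n1 < y n1"
    and e2: "\<forall>i<n2. y i = z i" and l2: "y n2 < z n2"
    using assms unfolding lex_le_def by blast
  have "\<forall>i<min n1 n2. x i = z i" using e1 e2 by simp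
  moreover have "x (min n1 n2) < z (min n1 n2)"
    using e1 e2 l1 l2 by (cases n1 n2 rule: linorder_cases) (simp_all add: min_def)
  ultimately show ?thesis unfolding lex_le_def by blast
qed (use assms in auto)

lemma ceil_line_mono: "0 \<le> g \<Longrightarrow> m \<le> n \<Longrightarrow> ceil_line g m \<le> ceil_line g n"
  unfolding ceil_line_def by (intro ceiling_mono mult_right_mono) auto

lemma ceil_line_period:
  assumes "quotient_of g = (p, q)"
  shows "ceil_line g (k * nat q + r) = int k * p + ceil_line g r"
proof -
  have line: "of_nat (k * nat q + r) * g = of_nat r * g + of_int (int k * p)"
    using quotient_of_denom_pos[OF assms] unfolding quotient_of_div[OF assms] by (simp add: field_simps)
  show ?thesis unfolding ceil_line_def line ceiling_add_of_int by simp
qed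

lemma per_mech_word:
  assumes "0 \<le> g"
  shows "int (per (mech_word g) i) = ceil_line g (Suc i) - ceil_line g i"
proof -
  obtain p q where qg: "quotient_of g = (p, q)" by (cases "quotient_of g")
  define n where "n = nat q"
  have n: "0 < n" unfolding n_def using quotient_of_denom_pos[OF qg] by simp
  have "per (mech_word g) i = nat (ceil_line g (Suc (i mod n)) - ceil_line g (i mod n))"
    using n by (simp add: per_def length_mech_word[OF qg] mech_word_def qg n_def)
  moreover have "ceil_line g (i mod n) \<le> ceil_line g (Suc (i mod n))"
    using assms by (simp add: ceil_line_mono)
  moreover have "ceil_line g i = int (i div n) * p + ceil_line g (i mod n)"
    using ceil_line_period[OF qg, of "i div n" "i mod n"] by (simp add: n_def)
  moreover have "ceil_line g (Suc i) = int (i div n) * p + ceil_line g (Suc (i mod n))"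
    using ceil_line_period[OF qg, of "i div n" "Suc (i mod n)"] by (simp add: n_def)
  ultimately show ?thesis by simp
qed

lemma psum_shift_per_mech_word:
  "0 \<le> g \<Longrightarrow> psum (\<lambda>i. per (mech_word g) (i + j)) N = ceil_line g (N + j) - ceil_line g j"
  by (induction N) (simp_all add: psum_def per_mech_word)

lemma psum_per_mech_word: "0 \<le> g \<Longrightarrow> psum (per (mech_word g)) N = ceil_line g N"
  using psum_shift_per_mech_word[of g 0 N] by (simp add: ceil_line_def)

lemma per_mech_word_01:
  assumes "0 \<le> g" "g \<le> 1"
  shows "per (mech_word g) i \<in> {0, 1}"
proof -
  have "ceil_line g (Suc i) \<le> ceil_line g i + \<lceil>g\<rceil>"
    unfolding ceil_line_def by (simp add: algebra_simps ceiling_add_le)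
  moreover have "\<lceil>g\<rceil> \<le> 1" using assms(2) by (simp add: ceiling_le_iff)
  moreover have "ceil_line g i \<le> ceil_line g (Suc i)" using assms(1) by (simp add: ceil_line_mono)
  ultimately have "int (per (mech_word g) i) = 0 \<or> int (per (mech_word g) i) = 1"
    using per_mech_word[OF assms(1), of i] by linarith
  then show ?thesis by auto
qed

text \<open>Subadditivity of \<open>n \<mapsto> \<lceil>n g\<rceil>\<close> makes the periodic mechanical word maximal among its shifts.\<close>

lemma shift_per_mech_word_lex_le:
  assumes "0 \<le> g"
  shows "lex_le (\<lambda>i. per (mech_word g) (i + j)) (per (mech_word g))"
proof (rule lex_le_if_psum_le)
  fix N
  have "ceil_line g (N + j) \<le> ceil_line g N + ceil_line g j"
    unfolding ceil_line_def by (simp add: distrib_right ceiling_add_le)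
  then show "psum (\<lambda>i. per (mech_word g) (i + j)) N \<le> psum (per (mech_word g)) N"
    using assms by (simp add: psum_shift_per_mech_word psum_per_mech_word)
qed

lemma psum_pre_per_prefix: "N \<le> length v \<Longrightarrow> psum (pre_per v u) N = psum (per v) N"
  by (induction N) (simp_all add: psum_def pre_per_def per_def)

lemma psum_pre_per_suffix:
  "psum (pre_per v u) (length v + n) = psum (per v) (length v) + psum (per u) n"
proof (induction n)
  case 0
  show ?case using psum_pre_per_prefix[of "length v" v u] by (simp add: psum_def)
next
  case (Suc n)
  then show ?case by (simp add: psum_def pre_per_def per_def)
qed

lemma ceil_line_mono_slope: "g \<le> g' \<Longrightarrow> ceil_line g n \<le> ceil_line g' n"
  unfolding ceil_line_def by (intro ceiling_mono mult_left_mono) auto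

lemma mediant_times_denom:
  assumes q1: "quotient_of g1 = (a, b)" and q2: "quotient_of g2 = (c, d)" and h: "b * c - a * d = 1"
  shows "of_int d * mediant g1 g2 = of_int c - 1 / of_int (b + d)"
proof -
  have bd: "(0::rat) < of_int (b + d)"
    using q1 q2 quotient_of_denom_pos by (metis add_pos_pos of_int_0_less_iff)
  have "of_int (d * (a + c)) = (of_int (c * (b + d) - 1) :: rat)"
    using h by (simp add: algebra_simps)
  then show ?thesis
    unfolding mediant_eq[OF q1 q2] using bd by (simp add: field_simps)
qed

lemma ceil_line_shift_le:
  assumes q1: "quotient_of g1 = (a, b)" and q2: "quotient_of g2 = (c, d)" and h: "b * c - a * d = 1"
    and lt: "mediant g1 g2 < g"
  shows "c + ceil_line (mediant g1 g2) n \<le> ceil_line g (nat d + n)"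
proof -
  define m where "m = ceil_line g (nat d + n)"
  have d: "0 < d" using q2 quotient_of_denom_pos by blast
  have q: "(0::rat) < of_int (b + d)"
    using q1 q2 quotient_of_denom_pos by (metis add_pos_pos of_int_0_less_iff)
  have "of_nat (nat d + n) * mediant g1 g2 < of_nat (nat d + n) * g"
    using lt d by (intro mult_strict_left_mono) auto
  also have "\<dots> \<le> of_int m" unfolding m_def ceil_line_def by simp
  finally have "of_int d * mediant g1 g2 + of_nat n * mediant g1 g2 < of_int m"
    using d by (simp add: distrib_right)
  then have "of_nat n * mediant g1 g2 < of_int (m - c) + 1 / of_int (b + d)"
    using mediant_times_denom[OF q1 q2 h] by simp
  have num: "of_nat n * mediant g1 g2 * of_int (b + d) = of_int (int n * (a + c))"
    unfolding mediant_eq[OF q1 q2] using q by simp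
  have "of_nat n * mediant g1 g2 * of_int (b + d) < (of_int (m - c) + 1 / of_int (b + d)) * of_int (b + d)"
    using \<open>of_nat n * mediant g1 g2 < _\<close> q by (rule mult_strict_right_mono)
  also have "\<dots> = of_int ((m - c) * (b + d) + 1)" using q by (simp add: distrib_right)
  finally have "int n * (a + c) \<le> (m - c) * (b + d)" unfolding num by (simp only: of_int_less_iff)
  then have "(of_int (int n * (a + c)) :: rat) \<le> of_int ((m - c) * (b + d))"
    by (simp only: of_int_le_iff)
  then have "of_nat n * mediant g1 g2 * of_int (b + d) \<le> of_int (m - c) * of_int (b + d)"
    unfolding num by simp
  then have "of_nat n * mediant g1 g2 \<le> of_int (m - c)" using q by simp
  then have "ceil_line (mediant g1 g2) n \<le> m - c" unfolding ceil_line_def by (simp add: ceiling_le_iff)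
  then show ?thesis unfolding m_def by simp
qed

lemma ceil_line_shift_less:
  assumes q1: "quotient_of g1 = (a, b)" and q2: "quotient_of g2 = (c, d)" and h: "b * c - a * d = 1"
    and lt: "mediant g1 g2 < g"
  obtains n where "c + ceil_line (mediant g1 g2) n < ceil_line g (nat d + n)"
proof -
  let ?m = "mediant g1 g2"
  obtain n where n: "2 < of_nat n * (g - ?m)" using ex_less_of_nat_mult[of "g - ?m" 2] lt by auto
  have d: "0 < d" using q2 quotient_of_denom_pos by blast
  have "0 < b" using q1 quotient_of_denom_pos by blast
  with d have q: "(1::rat) \<le> of_int (b + d)" by simp
  have "of_int (c + ceil_line ?m n) < of_int c + of_nat n * ?m + 1"
    unfolding ceil_line_def using ceiling_correct[of "of_nat n * ?m"] by simp
  also have "\<dots> \<le> of_int d * ?m + of_nat n * ?m + 2"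
    using mediant_times_denom[OF q1 q2 h] q by (simp add: divide_le_eq)
  also have "\<dots> < of_int d * g + of_nat n * g"
  proof -
    have "of_int d * ?m \<le> of_int d * g" using lt d by simp
    then show ?thesis using n by (simp add: algebra_simps)
  qed
  also have "\<dots> \<le> of_int (ceil_line g (nat d + n))"
    unfolding ceil_line_def using d by (simp add: distrib_right)
  finally show ?thesis using that by (simp only: of_int_less_iff)
qed

lemma psum_right_parent_word:
  assumes q1: "quotient_of g1 = (a, b)" and q2: "quotient_of g2 = (c, d)" and h: "b * c - a * d = 1"
    and "0 \<le> g2" "0 \<le> mediant g1 g2"
  shows "psum (pre_per (mech_word g2) (mech_word (mediant g1 g2))) N =
    (if N < nat d then ceil_line (mediant g1 g2) N else c + ceil_line (mediant g1 g2) (N - nat d))"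
proof -
  have len: "length (mech_word g2) = nat d" by (rule length_mech_word[OF q2])
  have d: "0 < d" using q2 quotient_of_denom_pos by blast
  have "ceil_line g2 (nat d) = c" unfolding ceil_line_def quotient_of_div[OF q2] using d by simp
  then show ?thesis
    using psum_pre_per_prefix[of N "mech_word g2" "mech_word (mediant g1 g2)"]
      psum_pre_per_suffix[of "mech_word g2" "mech_word (mediant g1 g2)" "N - nat d"]
      ceil_line_mediant_prefix[OF q1 q2 h, of N]
    by (auto simp: len psum_per_mech_word assms le_nat_iff)
qed

lemma right_parent_word_less_per_mech_word:
  assumes q1: "quotient_of g1 = (a, b)" and q2: "quotient_of g2 = (c, d)" and h: "b * c - a * d = 1"
    and "0 \<le> g2" "0 \<le> mediant g1 g2" and lt: "mediant g1 g2 < g"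
  shows "\<not> lex_le (per (mech_word g)) (pre_per (mech_word g2) (mech_word (mediant g1 g2)))"
proof -
  have g: "0 \<le> g" using assms(5) lt by simp
  let ?x = "pre_per (mech_word g2) (mech_word (mediant g1 g2))"
  have "psum ?x N \<le> psum (per (mech_word g)) N" for N
    using ceil_line_shift_le[OF q1 q2 h lt, of "N - nat d"] ceil_line_mono_slope[of _ g N] lt
    by (auto simp: psum_right_parent_word[OF q1 q2 h assms(4,5)] psum_per_mech_word[OF g])
  moreover obtain n where "c + ceil_line (mediant g1 g2) n < ceil_line g (nat d + n)"
    by (rule ceil_line_shift_less[OF q1 q2 h lt])
  then have "psum ?x (nat d + n) < psum (per (mech_word g)) (nat d + n)"
    by (simp add: psum_right_parent_word[OF q1 q2 h assms(4,5)] psum_per_mech_word[OF g])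
  ultimately show ?thesis by (rule not_lex_le_if_psum_less)
qed

lemma admissible_per_mech_word:
  assumes "0 \<le> g" "g \<le> 1" "lex_le (per (mech_word g)) (quasi_greedy \<beta>)"
  shows "admissible \<beta> (per (mech_word g))"
  unfolding admissible_def
  using per_mech_word_01 shift_per_mech_word_lex_le lex_le_trans assms by blast

lemma lex_le_quasi_greedy_if_admissible: "admissible \<beta> x \<Longrightarrow> lex_le x (quasi_greedy \<beta>)"
  unfolding admissible_def by (metis (no_types, lifting) add_0_right ext)

theorem mainTheorem2:
  fixes \<beta> :: real and \<gamma> :: rat
  assumes "0 < \<gamma>" and "\<gamma> < 1"
    and "1 < \<beta>" and "\<beta> < 2"
    and "lex_le (per (w \<gamma>)) (quasi_greedy \<beta>)"
    and "lex_le (quasi_greedy \<beta>) (pre_per (w (right_parent \<gamma>)) (w \<gamma>))"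
  shows "gamma_of \<beta> = real_of_rat \<gamma>"
proof -
  obtain g1 g2 a b c d where q1: "quotient_of g1 = (a, b)" and q2: "quotient_of g2 = (c, d)"
    and h: "b * c - a * d = 1" and \<gamma>: "mediant g1 g2 = \<gamma>" and g2: "0 \<le> g2" "g2 \<le> 1"
    using farey_parents_exist[OF assms(1,2)] by metis
  have "farey_neighbours g1 g2" using q1 q2 h by (simp add: farey_neighbours_def)
  then have "right_parent \<gamma> = g2" using \<gamma> right_parent_mediant by blast
  then have upper: "lex_le (quasi_greedy \<beta>) (pre_per (mech_word g2) (mech_word \<gamma>))"
    using assms(1,2,6) g2 by (simp add: w_eq_mech_word)
  define X where "X = {g. 0 \<le> g \<and> g \<le> 1 \<and> admissible \<beta> (per (w g))}"
  have "\<gamma> \<in> X"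
    using admissible_per_mech_word assms(1,2,5) by (simp add: X_def w_eq_mech_word)
  moreover have "g \<le> \<gamma>" if "g \<in> X" for g
  proof (rule ccontr)
    assume "\<not> g \<le> \<gamma>"
    moreover have "lex_le (per (mech_word g)) (quasi_greedy \<beta>)"
      using that lex_le_quasi_greedy_if_admissible by (auto simp: X_def w_eq_mech_word)
    then have "lex_le (per (mech_word g)) (pre_per (mech_word g2) (mech_word \<gamma>))"
      using upper by (rule lex_le_trans)
    ultimately show False
      using right_parent_word_less_per_mech_word[OF q1 q2 h g2(1)] assms(1) \<gamma> by auto
  qed
  ultimately have "Sup (real_of_rat ` X) = real_of_rat \<gamma>"
    by (intro cSup_eq_maximum) (auto simp: of_rat_less_eq)
  then show ?thesis unfolding gamma_of_def X_def .
qed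

end
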